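(* Assume the setting described in the context, and let $m=l+(k-1)d\in\{1,\dots,d(p+q)\}$ with $k\in\{1,\dots,p+q\}$ and $l\in\{1,\dots,d\}$. For every $z\in B(1,\delta_0)$ there exist $x_1^\pm(z),\dots,x_{p+q}^\pm(z)\in\mathbb C$ such that $$L_m^\pm(z)=\begin{pmatrix}x_1^\pm(z)\mathbf l_l^\pm\\ \vdots\\ x_{p+q}^\pm(z)\mathbf l_l^\pm\end{pmatrix},$$ and moreover $x_1^\pm(z)=\lambda_{l,q}^\pm\,(\zeta_m^\pm)'(z)$ for all $z\in B(1,\delta_0)$.
   Context: Let $d,p,q\ge1$. Let $\mathbf r_1^\pm,\dots,\mathbf r_d^\pm$ be a basis of $\mathbb C^d$ (eigenvectors of $df(u^\pm)$), $\mathbf P^\pm=(\mathbf r_1^\pm|\dots|\mathbf r_d^\pm)$ and $(\mathbf l_1^\pm|\dots|\mathbf l_d^\pm)^T=(\mathbf P^\pm)^{-1}$. Let $A_k^\pm\in\mathcal M_d(\mathbb C)$, $k=-p,\dots,q$, satisfy $(\mathbf P^\pm)^{-1}A_k^\pm\mathbf P^\pm=\mathrm{diag}(\lambda_{1,k}^\pm,\dots,\lambda_{d,k}^\pm)$, with $A^\pm_{-p},A^\pm_q$ invertible, and let $\mathcal F_l^\pm(\kappa)=\sum_{k=-p}^q\lambda_{l,k}^\pm\kappa^k$. Assume $\mathcal F_l^\pm(1)=1$ and that $\mathcal F_l^\pm(\kappa)=1$ has $p+q$ distinct nonzero roots for each $l$. Let $\delta_0>0$ be such that for each $l$ these roots extend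 to holomorphic functions $\zeta_{l+(k-1)d}^\pm$, $k=1,\dots,p+q$, on $B(1,\delta_0)$ with $\mathcal F_l^\pm(\zeta_{l+(k-1)d}^\pm(z))=z$ and the $\zeta^\pm_{l+(k-1)d}(z)$, $k=1,\dots,p+q$, pairwise distinct for each $z$. Define $R_m^\pm(z)=(\zeta_m^\pm(z)^{q-1}\mathbf r_l^\pm,\dots,\zeta_m^\pm(z)^{-p}\mathbf r_l^\pm)^T\in\mathbb C^{d(p+q)}$ for $m=l+(k-1)d$, $N^{\pm,\infty}(z)=(R_1^\pm(z)|\dots|R^\pm_{d(p+q)}(z))$ (invertible), and $L_1^\pm(z),\dots,L_{d(p+q)}^\pm(z)$ by $(L_1^\pm(z)|\dots|L_{d(p+q)}^\pm(z))^T=N^{\pm,\infty}(z)^{-1}$ (the dual basis). *)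

theory Defs
  imports "HOL-Analysis.Analysis" "Jordan_Normal_Form.Matrix"
begin

definition symF :: "nat \<Rightarrow> nat \<Rightarrow> (nat \<Rightarrow> int \<Rightarrow> complex) \<Rightarrow> nat \<Rightarrow> complex \<Rightarrow> complex" where
  "symF p q lam l \<kappa> = (\<Sum>k\<in>{- int p..int q}. lam l k * power_int \<kappa> k)"

text \<open>The matrix N^infinity(z) of size d(p+q): column m (0-based, m = l + k d with l < d)
  is R_m(z) = (zeta_m^(q-1) r_l, ..., zeta_m^(-p) r_l); its row index j*d+i (j < p+q, i < d)
  carries zeta_m(z)^(q-1-j) times the i-th entry of r_l = column l of P.\<close>
definition Ninf :: "nat \<Rightarrow> nat \<Rightarrow> nat \<Rightarrow> complex mat \<Rightarrow> (nat \<Rightarrow> complex \<Rightarrow> complex) \<Rightarrow> complex \<Rightarrow> complex mat" where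
  "Ninf d p q P \<zeta> z = mat (d * (p + q)) (d * (p + q))
     (\<lambda>(a, b). power_int (\<zeta> b z) (int q - 1 - int (a div d)) * P $$ (a mod d, b mod d))"

end

theory Submission
  imports Defs "HOL-Computational_Algebra.Polynomial"
begin

(* Dividing the Laurent polynomial F_l(kappa) - z by kappa - zeta_m(z)
   leaves G(kappa) = sum_j g_j kappa^(q-1-j) with leading coefficient g_0 = lambda_{l,q}.
   The row vector (g_j l_l)_j pairs with the column R_b of N^infinity(z) to give G(zeta_b(z)) when
   b lies in block l and 0 otherwise; as the zeta_b(z) of block l other than zeta_m(z) are the
   remaining roots of F_l = z, only b = m survives, so this row vector is G(zeta_m(z)) L_m(z).
   Differentiating (zeta_m(w) - zeta_m(z)) G(zeta_m(w)) = w - z at w = z gives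
   zeta_m'(z) G(zeta_m(z)) = 1, hence L_m(z) = zeta_m'(z) (g_j l_l)_j. *)

lemma sum_lessThan_mult_blocks:
  fixes f :: "nat \<Rightarrow> 'a::comm_monoid_add"
  shows "sum f {..<d * N} = (\<Sum>j<N. \<Sum>i<d. f (j * d + i))"
proof -
  have "sum f {j * d..<j * d + d} = (\<Sum>i<d. f (j * d + i))" for j
    using sum.shift_bounds_nat_ivl[of f 0 "j * d" d]
    by (simp add: atLeast0LessThan add.commute)
  then show ?thesis
    by (simp add: sum.nat_group[symmetric] mult.commute[of d N])
qed

lemma block_index_less:
  fixes i j :: nat
  assumes "j < N" "i < d"
  shows "j * d + i < d * N"
proof -
  have "j * d + i < Suc j * d"
    using assms(2) by simp
  also have "\<dots> \<le> d * N"
    using mult_le_mono1[OF Suc_leI[OF assms(1)], of d] by (simp add: mult.commute)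
  finally show ?thesis .
qed

lemma power_eq_power_mult_power_int:
  fixes \<kappa> :: "'a::division_ring"
  assumes "\<kappa> \<noteq> 0" "int i = int p + e"
  shows "\<kappa> ^ i = \<kappa> ^ p * power_int \<kappa> e"
proof -
  have "\<kappa> ^ i = power_int \<kappa> (int p + e)"
    by (metis assms(2) power_int_of_nat)
  then show ?thesis
    using assms(1) by (simp add: power_int_add)
qed

lemma poly_sum_monom_shift:
  fixes c :: "int \<Rightarrow> 'a::field"
  assumes "\<kappa> \<noteq> 0"
  shows "poly (\<Sum>n\<in>{- int p..int q}. monom (c n) (nat (n + int p))) \<kappa>
           = \<kappa> ^ p * (\<Sum>n\<in>{- int p..int q}. c n * power_int \<kappa> n)"
proof -
  have "poly (\<Sum>n\<in>{- int p..int q}. monom (c n) (nat (n + int p))) \<kappa>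
          = (\<Sum>n\<in>{- int p..int q}. c n * \<kappa> ^ nat (n + int p))"
    by (simp add: poly_sum poly_monom)
  also have "\<dots> = \<kappa> ^ p * (\<Sum>n\<in>{- int p..int q}. c n * power_int \<kappa> n)"
    unfolding sum_distrib_left
    by (intro sum.cong refl) (simp add: power_eq_power_mult_power_int[OF assms])
  finally show ?thesis .
qed

lemma poly_eq_power_mult_laurent_sum:
  fixes R :: "'a::field poly"
  assumes "degree R < p + q" "\<kappa> \<noteq> 0"
  shows "poly R \<kappa> = \<kappa> ^ p * (\<Sum>j<p + q. coeff R (p + q - 1 - j) * power_int \<kappa> (int q - 1 - int j))"
proof -
  have "poly R \<kappa> = (\<Sum>i<p + q. coeff R i * \<kappa> ^ i)"
    unfolding poly_altdef
    by (rule sum.mono_neutral_left) (use assms(1) in \<open>auto simp: coeff_eq_0\<close>)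
  also have "\<dots> = (\<Sum>j<p + q. coeff R (p + q - 1 - j) * \<kappa> ^ (p + q - 1 - j))"
    by (subst sum.nat_diff_reindex[symmetric]) simp
  also have "\<dots> = \<kappa> ^ p * (\<Sum>j<p + q. coeff R (p + q - 1 - j) * power_int \<kappa> (int q - 1 - int j))"
    unfolding sum_distrib_left
    by (intro sum.cong refl) (simp add: power_eq_power_mult_power_int[OF assms(2)])
  finally show ?thesis .
qed

lemma quotient_by_linear_factor:
  fixes R :: "'a::idom poly"
  assumes "degree ([:- \<zeta>, 1:] * R) \<le> n" "n \<ge> 1"
  shows "degree R < n" "coeff R (n - 1) = coeff ([:- \<zeta>, 1:] * R) n"
proof -
  show "degree R < n"
  proof (cases "R = 0")
    case False
    then have "degree ([:- \<zeta>, 1:] * R) = degree R + 1"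
      by (subst degree_mult_eq) auto
    with assms(1) show ?thesis by simp
  qed (use assms(2) in simp)
  moreover have "coeff ([:- \<zeta>, 1:] * R) (Suc (n - 1)) = - \<zeta> * coeff R (Suc (n - 1)) + coeff R (n - 1)"
    by simp
  ultimately show "coeff R (n - 1) = coeff ([:- \<zeta>, 1:] * R) n"
    using assms(2) by (simp add: coeff_eq_0)
qed

lemma laurent_sum_factor_root:
  fixes c :: "int \<Rightarrow> 'a::field"
  assumes "q \<ge> 1" "\<zeta> \<noteq> 0" "(\<Sum>n\<in>{- int p..int q}. c n * power_int \<zeta> n) = z"
  obtains g where "g 0 = c (int q)"
    "\<And>\<kappa>. \<kappa> \<noteq> 0 \<Longrightarrow> (\<Sum>n\<in>{- int p..int q}. c n * power_int \<kappa> n) - z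
                   = (\<kappa> - \<zeta>) * (\<Sum>j<p + q. g j * power_int \<kappa> (int q - 1 - int j))"
proof -
  define Q where "Q = (\<Sum>n\<in>{- int p..int q}. monom (c n) (nat (n + int p))) - monom z p"
  have poly_Q: "poly Q \<kappa> = \<kappa> ^ p * ((\<Sum>n\<in>{- int p..int q}. c n * power_int \<kappa> n) - z)"
    if "\<kappa> \<noteq> 0" for \<kappa>
    using poly_sum_monom_shift[OF that] by (simp add: Q_def poly_monom right_diff_distrib)
  have coeff_Q: "coeff Q i = (\<Sum>n\<in>{- int p..int q}. if nat (n + int p) = i then c n else 0)
                             - (if p = i then z else 0)" for i
    by (simp add: Q_def coeff_sum)
  have deg_Q: "degree Q \<le> p + q"
    by (rule degree_le) (auto simp: coeff_Q intro!: sum.neutral)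
  have lead_Q: "coeff Q (p + q) = c (int q)"
  proof -
    have "coeff Q (p + q) = (\<Sum>n\<in>{- int p..int q}. if nat (n + int p) = p + q then c n else 0)"
      unfolding coeff_Q using assms(1) by simp
    also have "\<dots> = (\<Sum>n\<in>{- int p..int q}. if n = int q then c n else 0)"
      by (rule sum.cong) auto
    finally show ?thesis by simp
  qed
  have "poly Q \<zeta> = 0"
    using poly_Q[OF assms(2)] assms(3) by simp
  then obtain R where Q_R: "Q = [:- \<zeta>, 1:] * R"
    by (metis dvdE poly_eq_0_iff_dvd)
  have deg_R: "degree R < p + q" and coeff_R: "coeff R (p + q - 1) = c (int q)"
    using quotient_by_linear_factor[of \<zeta> R "p + q"] deg_Q lead_Q assms(1) by (simp_all add: Q_R)
  show ?thesis
  proof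
    show "coeff R (p + q - 1 - 0) = c (int q)"
      using coeff_R by simp
  next
    fix \<kappa> :: 'a assume "\<kappa> \<noteq> 0"
    have "\<kappa> ^ p * ((\<Sum>n\<in>{- int p..int q}. c n * power_int \<kappa> n) - z) = (\<kappa> - \<zeta>) * poly R \<kappa>"
      using poly_Q[OF \<open>\<kappa> \<noteq> 0\<close>] by (simp add: Q_R algebra_simps)
    also have "\<dots> = \<kappa> ^ p * ((\<kappa> - \<zeta>) *
                       (\<Sum>j<p + q. coeff R (p + q - 1 - j) * power_int \<kappa> (int q - 1 - int j)))"
      using poly_eq_power_mult_laurent_sum[OF deg_R \<open>\<kappa> \<noteq> 0\<close>] by simp
    finally show "(\<Sum>n\<in>{- int p..int q}. c n * power_int \<kappa> n) - z
        = (\<kappa> - \<zeta>) * (\<Sum>j<p + q. coeff R (p + q - 1 - j) * power_int \<kappa> (int q - 1 - int j))"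
      using \<open>\<kappa> \<noteq> 0\<close> by simp
  qed
qed

lemma has_field_derivative_cofactor_eq_1:
  fixes f H :: "'a::real_normed_field \<Rightarrow> 'a"
  assumes f': "(f has_field_derivative D) (at z)" and H: "isCont H z"
    and factor: "\<forall>\<^sub>F w in at z. (f w - f z) * H w = w - z"
  shows "D * H z = 1"
proof -
  have "((\<lambda>w. (f w - f z) / (w - z) * H w) \<longlongrightarrow> D * H z) (at z)"
    using f' H by (intro tendsto_mult) (auto simp: has_field_derivative_iff isCont_def)
  moreover have "\<forall>\<^sub>F w in at z. (f w - f z) / (w - z) * H w = 1"
    using factor eventually_neq_at_within[of z z UNIV]
    by eventually_elim (simp add: field_simps)
  ultimately have "((\<lambda>w. 1) \<longlongrightarrow> D * H z) (at z)"
    by (rule Lim_transform_eventually)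
  then have "1 = D * H z"
    by (rule tendsto_unique[OF at_neq_bot tendsto_const])
  then show ?thesis
    by simp
qed

lemma deriv_right_inverse_mul_cofactor:
  fixes \<zeta> F G :: "complex \<Rightarrow> complex"
  assumes "\<zeta> holomorphic_on S" "open S" "z \<in> S" "open U" "continuous_on U G"
    and right_inverse: "\<And>w. w \<in> S \<Longrightarrow> \<zeta> w \<in> U \<and> F (\<zeta> w) = w"
    and cofactor: "\<And>\<kappa>. \<kappa> \<in> U \<Longrightarrow> F \<kappa> - z = (\<kappa> - \<zeta> z) * G \<kappa>"
  shows "deriv \<zeta> z * G (\<zeta> z) = 1"
proof (rule has_field_derivative_cofactor_eq_1[where f = \<zeta> and H = "\<lambda>w. G (\<zeta> w)"])
  show "(\<zeta> has_field_derivative deriv \<zeta> z) (at z)"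
    by (rule holomorphic_derivI[OF assms(1-3)])
  have "isCont \<zeta> z"
    using assms(1-3) holomorphic_on_imp_continuous_on continuous_on_eq_continuous_at by blast
  moreover have "isCont G (\<zeta> z)"
    using assms(4,5) right_inverse[OF assms(3)] continuous_on_eq_continuous_at by blast
  ultimately show "isCont (\<lambda>w. G (\<zeta> w)) z"
    by (rule isCont_o2)
  show "\<forall>\<^sub>F w in at z. (\<zeta> w - \<zeta> z) * G (\<zeta> w) = w - z"
    using eventually_at_in_open'[OF assms(2,3)]
    by (auto elim!: eventually_mono simp: right_inverse cofactor[symmetric])
qed

lemma row_eq_scaled_row_of_right_inverse:
  fixes N NI :: "'a::comm_ring_1 mat"
  assumes "N \<in> carrier_mat n n" "NI \<in> carrier_mat n n" "N * NI = 1\<^sub>m n" "m < n"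
    and yN: "\<And>b. b < n \<Longrightarrow> (\<Sum>a<n. y a * N $$ (a, b)) = (if b = m then c else 0)"
    and "a < n"
  shows "y a = c * NI $$ (m, a)"
proof -
  have "y a = (\<Sum>a'<n. y a' * (N * NI) $$ (a', a))"
    using assms by (simp add: if_distrib cong: if_cong)
  also have "\<dots> = (\<Sum>a'<n. \<Sum>b<n. y a' * N $$ (a', b) * NI $$ (b, a))"
    using assms(1,2,6) by (simp add: scalar_prod_def lessThan_atLeast0 sum_distrib_left mult.assoc)
  also have "\<dots> = (\<Sum>b<n. (\<Sum>a'<n. y a' * N $$ (a', b)) * NI $$ (b, a))"
    by (subst sum.swap) (simp add: sum_distrib_right)
  also have "\<dots> = (\<Sum>b<n. (if b = m then c else 0) * NI $$ (b, a))"
    by (simp add: yN)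
  also have "\<dots> = c * NI $$ (m, a)"
    using \<open>m < n\<close> by (simp add: if_distrib[of "\<lambda>x. x * _"] cong: if_cong)
  finally show ?thesis .
qed

lemma block_row_mult_Ninf:
  fixes P Pinv :: "complex mat" and g :: "nat \<Rightarrow> complex"
  assumes "P \<in> carrier_mat d d" "Pinv \<in> carrier_mat d d" "Pinv * P = 1\<^sub>m d"
    and "l < d" "b < d * (p + q)"
  shows "(\<Sum>a<d * (p + q). g (a div d) * Pinv $$ (l, a mod d) * Ninf d p q P \<zeta> z $$ (a, b))
           = (if b mod d = l then \<Sum>j<p + q. g j * power_int (\<zeta> b z) (int q - 1 - int j) else 0)"
proof -
  have "b mod d < d"
    using assms(4) by simp
  then have "(\<Sum>i<d. Pinv $$ (l, i) * P $$ (i, b mod d)) = (Pinv * P) $$ (l, b mod d)"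
    using assms(1,2,4) by (simp add: scalar_prod_def lessThan_atLeast0)
  also have "\<dots> = (if b mod d = l then 1 else 0)"
    using assms(3,4) \<open>b mod d < d\<close> by auto
  finally have dual: "(\<Sum>i<d. Pinv $$ (l, i) * P $$ (i, b mod d)) = (if b mod d = l then 1 else 0)" .
  have "(\<Sum>a<d * (p + q). g (a div d) * Pinv $$ (l, a mod d) * Ninf d p q P \<zeta> z $$ (a, b))
      = (\<Sum>a<d * (p + q). g (a div d) * power_int (\<zeta> b z) (int q - 1 - int (a div d))
                            * (Pinv $$ (l, a mod d) * P $$ (a mod d, b mod d)))"
    using assms(5) by (intro sum.cong refl) (simp add: Ninf_def ac_simps)
  also have "\<dots> = (\<Sum>j<p + q. g j * power_int (\<zeta> b z) (int q - 1 - int j)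
                      * (\<Sum>i<d. Pinv $$ (l, i) * P $$ (i, b mod d)))"
    unfolding sum_lessThan_mult_blocks sum_distrib_left by (intro sum.cong refl) simp
  finally show ?thesis
    by (simp add: dual)
qed

lemma block_row_eq_scaled_row_of_Ninv:
  fixes P Pinv NI :: "complex mat" and g :: "nat \<Rightarrow> complex" and F :: "complex \<Rightarrow> complex"
    and p q :: nat
  defines "G \<kappa> \<equiv> \<Sum>j<p + q. g j * power_int \<kappa> (int q - 1 - int j)"
  assumes "P \<in> carrier_mat d d" "Pinv \<in> carrier_mat d d" "Pinv * P = 1\<^sub>m d"
    and "NI \<in> carrier_mat (d * (p + q)) (d * (p + q))" "Ninf d p q P \<zeta> z * NI = 1\<^sub>m (d * (p + q))"
    and "l < d" "k < p + q"
    and roots: "\<And>k'. k' < p + q \<Longrightarrow> \<zeta> (l + k' * d) z \<noteq> 0 \<and> F (\<zeta> (l + k' * d) z) = z"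
    and distinct: "inj_on (\<lambda>k'. \<zeta> (l + k' * d) z) {..<p + q}"
    and cofactor: "\<And>\<kappa>. \<kappa> \<noteq> 0 \<Longrightarrow> F \<kappa> - z = (\<kappa> - \<zeta> (l + k * d) z) * G \<kappa>"
    and "j < p + q" "i < d"
  shows "g j * Pinv $$ (l, i) = G (\<zeta> (l + k * d) z) * NI $$ (l + k * d, j * d + i)"
proof -
  have m: "l + k * d < d * (p + q)" "(l + k * d) mod d = l"
    using block_index_less[OF assms(8,7)] assms(7) by (simp_all add: add.commute)
  have G_other_roots: "G (\<zeta> b z) = 0" if b: "b < d * (p + q)" "b mod d = l" "b \<noteq> l + k * d" for b
  proof -
    define k' where "k' = b div d"
    have "b = l + k' * d"
      using b(2) div_mult_mod_eq[of b d] by (simp add: k'_def add.commute)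
    moreover have "k' < p + q"
      using b(1) by (simp add: k'_def less_mult_imp_div_less mult.commute)
    ultimately have "\<zeta> b z \<noteq> \<zeta> (l + k * d) z" "\<zeta> b z \<noteq> 0" "F (\<zeta> b z) = z"
      using inj_onD[OF distinct, of k' k] roots[of k'] assms(8) b(3) by auto
    then show ?thesis
      using cofactor[of "\<zeta> b z"] by simp
  qed
  have "(\<Sum>a<d * (p + q). g (a div d) * Pinv $$ (l, a mod d) * Ninf d p q P \<zeta> z $$ (a, b))
          = (if b = l + k * d then G (\<zeta> (l + k * d) z) else 0)" if "b < d * (p + q)" for b
    using block_row_mult_Ninf[OF assms(2-4,7) that] G_other_roots[OF that] m(2)
    by (auto simp: G_def)
  then have "g (a div d) * Pinv $$ (l, a mod d) = G (\<zeta> (l + k * d) z) * NI $$ (l + k * d, a)"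
    if "a < d * (p + q)" for a
    using assms(5,6) m(1) that
    by (intro row_eq_scaled_row_of_right_inverse[where N = "Ninf d p q P \<zeta> z"
          and y = "\<lambda>a. g (a div d) * Pinv $$ (l, a mod d)"]) (auto simp: Ninf_def)
  from this[OF block_index_less[OF assms(12,13)]] show ?thesis
    using assms(13) by simp
qed

theorem lemma4p2:
  fixes d p q :: nat and P Pinv :: "complex mat" and A :: "int \<Rightarrow> complex mat"
    and lam :: "nat \<Rightarrow> int \<Rightarrow> complex" and \<zeta> :: "nat \<Rightarrow> complex \<Rightarrow> complex"
    and \<delta>0 :: real and Ninv :: "complex \<Rightarrow> complex mat" and l k :: nat
  assumes "d \<ge> 1" "p \<ge> 1" "q \<ge> 1"
    and "P \<in> carrier_mat d d" "Pinv \<in> carrier_mat d d"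
    and "Pinv * P = 1\<^sub>m d" "P * Pinv = 1\<^sub>m d"
    and "\<forall>j\<in>{- int p..int q}. A j \<in> carrier_mat d d \<and>
           Pinv * A j * P = mat d d (\<lambda>(a, b). if a = b then lam a j else 0)"
    and "invertible_mat (A (- int p))" "invertible_mat (A (int q))"
    and "\<forall>l'<d. symF p q lam l' 1 = 1"
    and "\<forall>l'<d. finite {\<kappa>. \<kappa> \<noteq> 0 \<and> symF p q lam l' \<kappa> = 1} \<and>
                card {\<kappa>. \<kappa> \<noteq> 0 \<and> symF p q lam l' \<kappa> = 1} = p + q"
    and "\<delta>0 > 0"
    and "\<forall>m<d * (p + q). \<zeta> m holomorphic_on ball 1 \<delta>0"
    and "\<forall>m<d * (p + q). \<forall>w\<in>ball 1 \<delta>0. \<zeta> m w \<noteq> 0 \<and> symF p q lam (m mod d) (\<zeta> m w) = w"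
    and "\<forall>l'<d. \<forall>w\<in>ball 1 \<delta>0. inj_on (\<lambda>k'. \<zeta> (l' + k' * d) w) {..<p + q}"
    and "\<forall>w\<in>ball 1 \<delta>0. Ninv w \<in> carrier_mat (d * (p + q)) (d * (p + q)) \<and>
           Ninv w * Ninf d p q P \<zeta> w = 1\<^sub>m (d * (p + q)) \<and>
           Ninf d p q P \<zeta> w * Ninv w = 1\<^sub>m (d * (p + q))"
    and "l < d" "k < p + q"
  shows "\<forall>z\<in>ball 1 \<delta>0. \<exists>x :: nat \<Rightarrow> complex.
           (\<forall>j<p + q. \<forall>i<d. Ninv z $$ (l + k * d, j * d + i) = x j * Pinv $$ (l, i)) \<and>
           x 0 = lam l (int q) * deriv (\<zeta> (l + k * d)) z"
proof
  fix z :: complex assume z: "z \<in> ball 1 \<delta>0"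
  have roots: "\<zeta> (l + k' * d) w \<noteq> 0" "symF p q lam l (\<zeta> (l + k' * d) w) = w"
    if "k' < p + q" "w \<in> ball 1 \<delta>0" for k' w
    using assms(15,18) block_index_less[OF that(1) assms(18)] that(2) by (auto simp: add.commute)
  obtain g where g0: "g 0 = lam l (int q)" and factor: "\<And>\<kappa>. \<kappa> \<noteq> 0 \<Longrightarrow>
      symF p q lam l \<kappa> - z
        = (\<kappa> - \<zeta> (l + k * d) z) * (\<Sum>j<p + q. g j * power_int \<kappa> (int q - 1 - int j))"
    using laurent_sum_factor_root[OF assms(3) roots(1)[OF assms(19) z]] roots(2)[OF assms(19) z]
    unfolding symF_def by blast
  define G where "G \<kappa> = (\<Sum>j<p + q. g j * power_int \<kappa> (int q - 1 - int j))" for \<kappa>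
  have deriv_G: "deriv (\<zeta> (l + k * d)) z * G (\<zeta> (l + k * d) z) = 1"
  proof (rule deriv_right_inverse_mul_cofactor[where U = "- {0}" and F = "symF p q lam l"])
    show "\<zeta> (l + k * d) holomorphic_on ball 1 \<delta>0"
      using assms(14,18,19) block_index_less[OF assms(19,18)] by (simp add: add.commute)
    show "continuous_on (- {0}) G"
      unfolding G_def by (intro continuous_intros) auto
    show "\<zeta> (l + k * d) w \<in> - {0} \<and> symF p q lam l (\<zeta> (l + k * d) w) = w"
      if "w \<in> ball 1 \<delta>0" for w
      using roots[OF assms(19) that] by simp
    show "symF p q lam l \<kappa> - z = (\<kappa> - \<zeta> (l + k * d) z) * G \<kappa>" if "\<kappa> \<in> - {0}" for \<kappa>
      using factor that by (simp add: G_def)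
  qed (use z in auto)
  have row: "g j * Pinv $$ (l, i) = G (\<zeta> (l + k * d) z) * Ninv z $$ (l + k * d, j * d + i)"
    if "j < p + q" "i < d" for j i
    using block_row_eq_scaled_row_of_Ninv[OF assms(4-6) _ _ assms(18,19) _ _ _ that,
        of "Ninv z" \<zeta> z "symF p q lam l" g]
      assms(16-18) roots z factor
    by (simp add: G_def)
  show "\<exists>x. (\<forall>j<p + q. \<forall>i<d. Ninv z $$ (l + k * d, j * d + i) = x j * Pinv $$ (l, i)) \<and>
            x 0 = lam l (int q) * deriv (\<zeta> (l + k * d)) z"
  proof (intro exI conjI allI impI)
    fix j i assume "j < p + q" "i < d"
    have "Ninv z $$ (l + k * d, j * d + i)
        = deriv (\<zeta> (l + k * d)) z * (G (\<zeta> (l + k * d) z) * Ninv z $$ (l + k * d, j * d + i))"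
      using deriv_G by (simp add: mult.assoc[symmetric])
    then show "Ninv z $$ (l + k * d, j * d + i) = deriv (\<zeta> (l + k * d)) z * g j * Pinv $$ (l, i)"
      using row[OF \<open>j < p + q\<close> \<open>i < d\<close>] by (simp add: mult.assoc)
  qed (simp add: g0 mult.commute)
qed

end
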